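(* $\Omega$ is an open subset of $\widehat G$.
   Context: Let $G$ be a metrizable, $\sigma$-compact locally compact abelian group (written additively) with Haar measure $\nu$, and $(Y,\lambda)$ a $\sigma$-finite measure space with $L^2(G,\nu)$, $L^2(Y,\lambda)$ separable. Let $H$ be a reproducing kernel Hilbert space of complex functions on $G\times Y$ whose inner product is that of $L^2(G\times Y,\nu\otimes\lambda)$, with reproducing kernel $(K_{x,y})_{(x,y)\in G\times Y}$. Assume $K_{x,y}(u,v)=K_{0,y}(u-x,v)$ for all $u,x\in G$, $v,y\in Y$, and $\sup_{v\in Y}\int_G|K_{0,y}(u,v)|\,d\nu(u)<\infty$ for every $y\in Y$. Let $\widehat G$ be the dual group of $G$ (with its usual topology). Define $L_{\xi,y}(v)=\int_G K_{0,y}(u,v)\overline{\xi(u)}\,d\nu(u)$ for $\xi\in\widehat G$, $y,v\in Y$, and $\Omega=\{\xi\in\widehat G:\exists y\in Y,\ L_{\xi,y}(y)>0\}$. *)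

theory Defs
  imports "HOL-Analysis.Analysis"
begin

text \<open>A Haar measure on a (metrizable, sigma-compact, locally compact) abelian group:
  a nonzero translation-invariant Borel measure which is finite on compact sets and positive on
  nonempty open sets. (On sigma-compact metrizable locally compact spaces such locally finite Borel
  measures are automatically regular, i.e. Radon.)\<close>

definition haar_measure :: "('g::{topological_ab_group_add, metric_space}) measure \<Rightarrow> bool" where
  "haar_measure \<nu> \<longleftrightarrow>
     sets \<nu> = sets borel \<and>
     (\<forall>K. compact K \<longrightarrow> emeasure \<nu> K < \<infinity>) \<and>
     (\<forall>U. open U \<and> U \<noteq> {} \<longrightarrow> emeasure \<nu> U > 0) \<and>
     (\<forall>x. \<forall>A \<in> sets borel. emeasure \<nu> ((\<lambda>u. x + u) ` A) = emeasure \<nu> A)"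

definition square_integrable :: "'a measure \<Rightarrow> ('a \<Rightarrow> complex) \<Rightarrow> bool" where
  "square_integrable M f \<longleftrightarrow> f \<in> borel_measurable M \<and> integrable M (\<lambda>z. (cmod (f z))\<^sup>2)"

definition L2_dist2 :: "'a measure \<Rightarrow> ('a \<Rightarrow> complex) \<Rightarrow> ('a \<Rightarrow> complex) \<Rightarrow> real" where
  "L2_dist2 M f g = (\<integral>z. (cmod (f z - g z))\<^sup>2 \<partial>M)"

definition L2_separable :: "'a measure \<Rightarrow> bool" where
  "L2_separable M \<longleftrightarrow> (\<exists>D. countable D \<and> (\<forall>d\<in>D. square_integrable M d) \<and>
     (\<forall>f. square_integrable M f \<longrightarrow> (\<forall>e>0. \<exists>d\<in>D. L2_dist2 M f d < e)))"

text \<open>H is a set of (genuine) functions on the space of M, each square integrable, forming a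
  complex linear space which is complete for the L2 norm (so a Hilbert space with the L2 inner
  product); K z is the reproducing kernel at z: K z \<in> H and f z = \<langle>f, K z\<rangle>_{L2} for f \<in> H.\<close>

definition rkhs_L2 :: "'a measure \<Rightarrow> ('a \<Rightarrow> complex) set \<Rightarrow> ('a \<Rightarrow> 'a \<Rightarrow> complex) \<Rightarrow> bool" where
  "rkhs_L2 M H K \<longleftrightarrow>
     (\<forall>f\<in>H. square_integrable M f) \<and>
     (\<lambda>_. 0) \<in> H \<and>
     (\<forall>f\<in>H. \<forall>g\<in>H. (\<lambda>z. f z + g z) \<in> H) \<and>
     (\<forall>c. \<forall>f\<in>H. (\<lambda>z. c * f z) \<in> H) \<and>
     (\<forall>s. (\<forall>n. s n \<in> H) \<and> (\<forall>e>0. \<exists>N. \<forall>m\<ge>N. \<forall>n\<ge>N. L2_dist2 M (s m) (s n) < e)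
          \<longrightarrow> (\<exists>f\<in>H. (\<lambda>n. L2_dist2 M (s n) f) \<longlonglongrightarrow> 0)) \<and>
     (\<forall>z\<in>space M. K z \<in> H) \<and>
     (\<forall>f\<in>H. \<forall>z\<in>space M. f z = (\<integral>w. f w * cnj (K z w) \<partial>M))"

definition dual_group :: "('g::{topological_ab_group_add, metric_space} \<Rightarrow> complex) set" where
  "dual_group = {\<xi>. continuous_on UNIV \<xi> \<and> (\<forall>x. cmod (\<xi> x) = 1) \<and> (\<forall>x y. \<xi> (x + y) = \<xi> x * \<xi> y)}"

text \<open>The usual topology on the dual group: the compact-open topology, i.e. the topology of
  uniform convergence on compact subsets of G.\<close>

definition dual_open :: "('g::{topological_ab_group_add, metric_space} \<Rightarrow> complex) set \<Rightarrow> bool" where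
  "dual_open U \<longleftrightarrow> U \<subseteq> dual_group \<and>
     (\<forall>\<xi>0\<in>U. \<exists>K e. compact K \<and> e > 0 \<and>
        {\<xi>\<in>dual_group. \<forall>x\<in>K. cmod (\<xi> x - \<xi>0 x) < e} \<subseteq> U)"

lemma istopology_dual_open: "istopology dual_open"
  unfolding istopology_def
proof (intro conjI allI impI)
  fix S T :: "('g::{topological_ab_group_add, metric_space} \<Rightarrow> complex) set"
  assume S: "dual_open S" and T: "dual_open T"
  show "dual_open (S \<inter> T)"
    unfolding dual_open_def
  proof (intro conjI ballI)
    show "S \<inter> T \<subseteq> dual_group" using S unfolding dual_open_def by blast
  next
    fix \<xi>0 assume x0: "\<xi>0 \<in> S \<inter> T"
    from x0 have "\<xi>0 \<in> S" by (rule IntD1)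
    with S obtain K1 e1 where 1: "compact K1" "e1 > 0"
        "{\<xi>\<in>dual_group. \<forall>x\<in>K1. cmod (\<xi> x - \<xi>0 x) < e1} \<subseteq> S"
      unfolding dual_open_def by blast
    from x0 have "\<xi>0 \<in> T" by (rule IntD2)
    with T obtain K2 e2 where 2: "compact K2" "e2 > 0"
        "{\<xi>\<in>dual_group. \<forall>x\<in>K2. cmod (\<xi> x - \<xi>0 x) < e2} \<subseteq> T"
      unfolding dual_open_def by blast
    show "\<exists>K e. compact K \<and> e > 0 \<and> {\<xi>\<in>dual_group. \<forall>x\<in>K. cmod (\<xi> x - \<xi>0 x) < e} \<subseteq> S \<inter> T"
    proof (intro exI conjI)
      show "compact (K1 \<union> K2)" using 1(1) 2(1) by (rule compact_Un)
      show "min e1 e2 > 0" using 1(2) 2(2) by simp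
      show "{\<xi>\<in>dual_group. \<forall>x\<in>K1 \<union> K2. cmod (\<xi> x - \<xi>0 x) < min e1 e2} \<subseteq> S \<inter> T"
      proof
        fix \<xi> assume "\<xi> \<in> {\<xi>\<in>dual_group. \<forall>x\<in>K1 \<union> K2. cmod (\<xi> x - \<xi>0 x) < min e1 e2}"
        then have "\<xi> \<in> {\<xi>\<in>dual_group. \<forall>x\<in>K1. cmod (\<xi> x - \<xi>0 x) < e1}"
          and "\<xi> \<in> {\<xi>\<in>dual_group. \<forall>x\<in>K2. cmod (\<xi> x - \<xi>0 x) < e2}"
          by auto
        then show "\<xi> \<in> S \<inter> T" using 1(3) 2(3) by blast
      qed
    qed
  qed
next
  fix \<K> :: "('g::{topological_ab_group_add, metric_space} \<Rightarrow> complex) set set"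
  assume H: "\<forall>S\<in>\<K>. dual_open S"
  show "dual_open (\<Union>\<K>)"
    unfolding dual_open_def
  proof (intro conjI ballI)
    show "\<Union>\<K> \<subseteq> dual_group"
    proof
      fix \<xi> assume "\<xi> \<in> \<Union>\<K>"
      then obtain S where "S \<in> \<K>" "\<xi> \<in> S" by blast
      moreover from H \<open>S \<in> \<K>\<close> have "dual_open S" by (rule bspec)
      ultimately show "\<xi> \<in> dual_group" unfolding dual_open_def by blast
    qed
  next
    fix \<xi>0 assume "\<xi>0 \<in> \<Union>\<K>"
    then obtain S where S: "S \<in> \<K>" "\<xi>0 \<in> S" by blast
    from H S(1) have "dual_open S" by (rule bspec)
    with S(2) obtain K e where "compact K" "e > 0"
        "{\<xi>\<in>dual_group. \<forall>x\<in>K. cmod (\<xi> x - \<xi>0 x) < e} \<subseteq> S"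
      unfolding dual_open_def by blast
    then show "\<exists>K e. compact K \<and> e > 0 \<and>
        {\<xi>\<in>dual_group. \<forall>x\<in>K. cmod (\<xi> x - \<xi>0 x) < e} \<subseteq> \<Union>\<K>"
      using S(1) by blast
  qed
qed

definition dual_topology :: "('g::{topological_ab_group_add, metric_space} \<Rightarrow> complex) topology" where
  "dual_topology = topology dual_open"

lemma openin_dual_topology:
  fixes U :: "('g::{topological_ab_group_add, metric_space} \<Rightarrow> complex) set"
  shows "openin dual_topology U \<longleftrightarrow> dual_open U"
proof -
  have "istopology (dual_open :: ('g \<Rightarrow> complex) set \<Rightarrow> bool)" by (rule istopology_dual_open)
  then have "openin (topology dual_open) = (dual_open :: ('g \<Rightarrow> complex) set \<Rightarrow> bool)"
    by (rule topology_inverse')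
  then show ?thesis unfolding dual_topology_def by simp
qed

end

theory Submission
  imports Defs
begin

text \<open>For y \<in> Y the number L \<xi> y y is the Fourier transform at \<xi> of the integrable function
  k_y u = K 0 y u y. The Fourier transform of an integrable function is continuous for the
  compact-open topology of the dual group: outside a large compact set the integral of |k_y| is
  small, and on that compact set the characters near \<xi> are uniformly close to \<xi>. Hence the set
  of characters \<xi> with Re (L \<xi> y y) > 0 is open. Moreover L \<xi> y y is always real: the
  reproducing kernel is Hermitian, so k_y (- u) = cnj (k_y u), and the Haar measure of an
  abelian group is invariant under u \<mapsto> - u (a Fubini argument, which needs the group
  operations to be measurable on G \<times> G; this holds because sigma-compact metric spaces are
  second countable). So \<Omega> is the union over y of these open sets.\<close>

lemma sigma_compact_exhaustion:
  assumes "\<exists>\<C>. countable \<C> \<and> (\<forall>C\<in>\<C>. compact C) \<and> \<Union>\<C> = (UNIV :: 'a::topological_space set)"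
  obtains D :: "nat \<Rightarrow> 'a::topological_space set"
  where "\<And>n. compact (D n)" "incseq D" "(\<Union>n. D n) = UNIV"
proof -
  from assms obtain \<C> :: "'a set set"
    where \<C>: "countable \<C>" "\<forall>C\<in>\<C>. compact C" "\<Union>\<C> = UNIV"
    by (elim exE conjE)
  then have "\<C> \<noteq> {}" by auto
  define D where "D n = (\<Union>i\<le>n. from_nat_into \<C> i)" for n
  show thesis
  proof
    show "compact (D n)" for n
      unfolding D_def
      using \<C>(2) from_nat_into[OF \<open>\<C> \<noteq> {}\<close>] by (intro compact_UN finite_atMost) blast
    show "incseq D"
      unfolding D_def by (intro monoI UN_mono) simp_all
    have "from_nat_into \<C> n \<subseteq> D n" for n
      unfolding D_def by (rule UN_upper) simp
    then have "\<Union>(range (from_nat_into \<C>)) \<subseteq> (\<Union>n. D n)"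
      by (rule UN_mono[OF subset_refl])
    then have "UNIV \<subseteq> (\<Union>n. D n)"
      using \<C>(1,3) \<open>\<C> \<noteq> {}\<close> by simp
    then show "(\<Union>n. D n) = UNIV"
      by (rule top_le)
  qed
qed

lemma sigma_compact_imp_second_countable:
  assumes "\<exists>\<C>. countable \<C> \<and> (\<forall>C\<in>\<C>. compact C) \<and> \<Union>\<C> = (UNIV :: 'a::metric_space set)"
  shows "second_countable (euclidean :: 'a topology)"
proof -
  obtain D :: "nat \<Rightarrow> 'a set" where D: "\<And>n. compact (D n)" "(\<Union>n. D n) = UNIV"
    using sigma_compact_exhaustion[OF assms] by metis
  have "\<exists>F. finite F \<and> D n \<subseteq> (\<Union>x\<in>F. ball x (1 / Suc m))" for n m
    using D(1)[unfolded compact_eq_totally_bounded] by simp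
  then obtain F where F: "\<And>n m. finite (F n m)" "\<And>n m. D n \<subseteq> (\<Union>x\<in>F n m. ball x (1 / Suc m))"
    by metis
  define \<B> where "\<B> = (\<Union>n m. (\<lambda>x. ball x (1 / Suc m)) ` F n m)"
  have "countable \<B>"
    unfolding \<B>_def
    by (rule countable_UN[OF countableI_type], rule countable_UN[OF countableI_type],
        rule countable_image, rule countable_finite, rule F(1))
  moreover have "\<forall>V\<in>\<B>. open V"
    unfolding \<B>_def by blast
  moreover have "\<exists>V\<in>\<B>. x \<in> V \<and> V \<subseteq> U" if "open U" "x \<in> U" for U x
  proof -
    obtain e where e: "e > 0" "ball x e \<subseteq> U"
      using \<open>open U\<close> \<open>x \<in> U\<close> open_contains_ball by blast
    obtain m :: nat where m: "1 / Suc m < e / 2"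
      using reals_Archimedean[of "e / 2"] e(1) by (auto simp: inverse_eq_divide)
    obtain n where "x \<in> D n" using D(2) by (metis UNIV_I UN_E)
    then obtain c where c: "c \<in> F n m" "x \<in> ball c (1 / Suc m)"
      using F(2) by blast
    have "ball c (1 / Suc m) \<subseteq> ball x e"
    proof
      fix z assume "z \<in> ball c (1 / Suc m)"
      then have "dist c z < 1 / Suc m" by simp
      moreover have "dist c x < 1 / Suc m" using c(2) by simp
      moreover have "dist x z \<le> dist c x + dist c z" by (rule dist_triangle3)
      ultimately have "dist x z < e" using m by linarith
      then show "z \<in> ball x e" by simp
    qed
    moreover have "ball c (1 / Suc m) \<in> \<B>"
      unfolding \<B>_def using c(1) by blast
    ultimately show ?thesis
      using c(2) e(2) by blast
  qed
  ultimately show ?thesis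
    unfolding second_countable_def open_openin[symmetric] by (intro exI[of _ \<B>]) blast
qed

lemma open_imp_sets_pair_measure:
  fixes W :: "('a::topological_space \<times> 'b::topological_space) set"
  assumes "second_countable (euclidean :: 'a topology)" "second_countable (euclidean :: 'b topology)"
    and "sets M = sets borel" "sets N = sets borel" and "open W"
  shows "W \<in> sets (M \<Otimes>\<^sub>M N)"
proof -
  obtain \<A> :: "'a set set" where \<A>: "countable \<A>" "\<forall>A\<in>\<A>. open A"
    "\<forall>U x. open U \<and> x \<in> U \<longrightarrow> (\<exists>A\<in>\<A>. x \<in> A \<and> A \<subseteq> U)"
    using assms(1) unfolding second_countable_def by auto
  obtain \<B> :: "'b set set" where \<B>: "countable \<B>" "\<forall>B\<in>\<B>. open B"
    "\<forall>U x. open U \<and> x \<in> U \<longrightarrow> (\<exists>B\<in>\<B>. x \<in> B \<and> B \<subseteq> U)"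
    using assms(2) unfolding second_countable_def by auto
  define R where "R = {A \<times> B | A B. A \<in> \<A> \<and> B \<in> \<B> \<and> A \<times> B \<subseteq> W}"
  have "R \<subseteq> (\<lambda>(A, B). A \<times> B) ` (\<A> \<times> \<B>)"
    unfolding R_def by auto
  then have "countable R"
    by (rule countable_subset) (intro countable_image countable_SIGMA \<A>(1) \<B>(1))
  moreover have "R \<subseteq> sets (M \<Otimes>\<^sub>M N)"
    unfolding R_def using \<A>(2) \<B>(2) assms(3,4) by (auto intro!: pair_measureI)
  moreover have "W = \<Union>R"
  proof
    show "\<Union>R \<subseteq> W" unfolding R_def by auto
    show "W \<subseteq> \<Union>R"
    proof
      fix z assume "z \<in> W"
      then obtain U V where UV: "open U" "open V" "z \<in> U \<times> V" "U \<times> V \<subseteq> W"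
        using \<open>open W\<close> by (metis open_prod_elim)
      then obtain A B where "A \<in> \<A>" "fst z \<in> A" "A \<subseteq> U" "B \<in> \<B>" "snd z \<in> B" "B \<subseteq> V"
        using \<A>(3) \<B>(3) by (metis mem_Times_iff)
      then have "A \<times> B \<in> R"
        unfolding R_def using UV(4) by blast
      moreover have "z \<in> A \<times> B"
        using \<open>fst z \<in> A\<close> \<open>snd z \<in> B\<close> by (simp add: mem_Times_iff)
      ultimately show "z \<in> \<Union>R" by blast
    qed
  qed
  ultimately show ?thesis
    using sets.countable_Union by metis
qed

lemma borel_measurable_pair_continuous:
  fixes \<phi> :: "'a::topological_space \<times> 'b::topological_space \<Rightarrow> 'c::topological_space"
  assumes "second_countable (euclidean :: 'a topology)" "second_countable (euclidean :: 'b topology)"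
    and "sets M = sets borel" "sets N = sets borel" and "continuous_on UNIV \<phi>"
  shows "\<phi> \<in> borel_measurable (M \<Otimes>\<^sub>M N)"
proof (rule borel_measurableI)
  fix S :: "'c set" assume "open S"
  then have "\<phi> -` S \<in> sets (M \<Otimes>\<^sub>M N)"
    using assms by (intro open_imp_sets_pair_measure open_vimage) simp_all
  moreover have "space (M \<Otimes>\<^sub>M N) = UNIV"
    using sets_eq_imp_space_eq[OF assms(3)] sets_eq_imp_space_eq[OF assms(4)]
    by (simp add: space_pair_measure)
  ultimately show "\<phi> -` S \<inter> space (M \<Otimes>\<^sub>M N) \<in> sets (M \<Otimes>\<^sub>M N)"
    by simp
qed

lemma haar_measure_sets: "haar_measure \<nu> \<Longrightarrow> sets \<nu> = sets borel"
  unfolding haar_measure_def by simp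

lemma haar_measure_space: "haar_measure \<nu> \<Longrightarrow> space \<nu> = UNIV"
  using sets_eq_imp_space_eq[OF haar_measure_sets] by simp

lemma haar_distr_translate:
  assumes "haar_measure \<nu>"
  shows "distr \<nu> borel (\<lambda>x. x + t) = \<nu>"
proof (rule measure_eqI)
  have meas: "(\<lambda>x. x + t) \<in> measurable \<nu> borel"
    unfolding measurable_cong_sets[OF haar_measure_sets[OF assms] refl]
    by (intro borel_measurable_continuous_onI continuous_intros)
  show "sets (distr \<nu> borel (\<lambda>x. x + t)) = sets \<nu>"
    using haar_measure_sets[OF assms] by simp
  fix A assume "A \<in> sets (distr \<nu> borel (\<lambda>x. x + t))"
  then have A: "A \<in> sets borel" by simp
  have "(\<lambda>x. x + t) -` A \<inter> space \<nu> = (+) (- t) ` A"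
    unfolding haar_measure_space[OF assms] by (force simp: algebra_simps)
  moreover have "emeasure \<nu> ((+) (- t) ` A) = emeasure \<nu> A"
    using assms A unfolding haar_measure_def by blast
  ultimately show "emeasure (distr \<nu> borel (\<lambda>x. x + t)) A = emeasure \<nu> A"
    by (simp add: emeasure_distr[OF meas A])
qed

lemma haar_nn_integral_translate:
  assumes "haar_measure \<nu>" and "h \<in> borel_measurable borel"
  shows "(\<integral>\<^sup>+x. h (x + t) \<partial>\<nu>) = integral\<^sup>N \<nu> h"
proof -
  have "(\<lambda>x. x + t) \<in> measurable \<nu> borel"
    unfolding measurable_cong_sets[OF haar_measure_sets[OF assms(1)] refl]
    by (intro borel_measurable_continuous_onI continuous_intros)
  then have "integral\<^sup>N (distr \<nu> borel (\<lambda>x. x + t)) h = (\<integral>\<^sup>+x. h (x + t) \<partial>\<nu>)"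
    using assms(2) by (intro nn_integral_distr) simp_all
  then show ?thesis
    by (simp add: haar_distr_translate[OF assms(1)])
qed

lemma haar_sigma_finite:
  fixes \<nu> :: "'g::{topological_ab_group_add, metric_space} measure"
  assumes "haar_measure \<nu>"
    and "\<exists>\<C>. countable \<C> \<and> (\<forall>C\<in>\<C>. compact C) \<and> \<Union>\<C> = (UNIV :: 'g set)"
  shows "sigma_finite_measure \<nu>"
proof
  obtain D :: "nat \<Rightarrow> 'g set" where D: "\<And>n. compact (D n)" "incseq D" "(\<Union>n. D n) = UNIV"
    using sigma_compact_exhaustion[OF assms(2)] by metis
  have "range D \<subseteq> sets \<nu>"
    using D(1) haar_measure_sets[OF assms(1)] by (auto intro: borel_closed compact_imp_closed)
  moreover have "\<forall>C\<in>range D. emeasure \<nu> C \<noteq> \<infinity>"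
    using D(1) assms(1) unfolding haar_measure_def by (auto simp: less_top)
  ultimately show "\<exists>A. countable A \<and> A \<subseteq> sets \<nu> \<and> \<Union>A = space \<nu> \<and> (\<forall>a\<in>A. emeasure \<nu> a \<noteq> \<infinity>)"
    using D(3) haar_measure_space[OF assms(1)] by (intro exI[of _ "range D"]) simp
qed

lemma haar_obtain_compact_positive_finite:
  fixes \<nu> :: "'g::{topological_ab_group_add, metric_space} measure"
  assumes "haar_measure \<nu>"
    and "\<exists>\<C>. countable \<C> \<and> (\<forall>C\<in>\<C>. compact C) \<and> \<Union>\<C> = (UNIV :: 'g set)"
  obtains C where "compact C" "0 < emeasure \<nu> C" "emeasure \<nu> C < \<infinity>"
proof -
  obtain D :: "nat \<Rightarrow> 'g set" where D: "\<And>n. compact (D n)" "incseq D" "(\<Union>n. D n) = UNIV"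
    using sigma_compact_exhaustion[OF assms(2)] by metis
  have "range D \<subseteq> sets \<nu>"
    using D(1) haar_measure_sets[OF assms(1)] by (auto intro: borel_closed compact_imp_closed)
  then have "(SUP n. emeasure \<nu> (D n)) = emeasure \<nu> UNIV"
    using D(2,3) by (simp add: SUP_emeasure_incseq)
  moreover have "0 < emeasure \<nu> UNIV"
    using assms(1) unfolding haar_measure_def by simp
  ultimately obtain n where "0 < emeasure \<nu> (D n)"
    by (metis less_SUP_iff)
  moreover have "emeasure \<nu> (D n) < \<infinity>"
    using assms(1) D(1) unfolding haar_measure_def by simp
  ultimately show thesis
    using D(1) that by blast
qed

lemma borel_measurable_pair_times_continuous:
  fixes f g :: "'a::topological_space \<Rightarrow> ennreal" and \<phi> :: "'a \<times> 'a \<Rightarrow> 'a"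
  assumes "second_countable (euclidean :: 'a topology)" and "sets M = sets borel"
    and "f \<in> borel_measurable borel" and "g \<in> borel_measurable borel"
    and "continuous_on UNIV \<phi>"
  shows "(\<lambda>p. f (fst p) * g (\<phi> p)) \<in> borel_measurable (M \<Otimes>\<^sub>M M)"
proof (rule borel_measurable_times_ennreal)
  have "f \<in> borel_measurable M"
    using assms(3) by (simp add: measurable_cong_sets[OF assms(2) refl])
  then show "(\<lambda>p. f (fst p)) \<in> borel_measurable (M \<Otimes>\<^sub>M M)"
    by (rule measurable_compose[OF measurable_fst])
  show "(\<lambda>p. g (\<phi> p)) \<in> borel_measurable (M \<Otimes>\<^sub>M M)"
    using borel_measurable_pair_continuous[OF assms(1,1,2,2,5)] assms(4) by (rule measurable_compose)
qed

lemma
  fixes h :: "'g::topological_group_add \<Rightarrow> 'b::topological_space"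
  assumes "h \<in> borel_measurable borel"
  shows borel_measurable_add_left: "(\<lambda>y. h (a + y)) \<in> borel_measurable borel"
    and borel_measurable_diff_left: "(\<lambda>y. h (a - y)) \<in> borel_measurable borel"
proof -
  have "(\<lambda>y. a + y) \<in> borel_measurable borel" "(\<lambda>y. a - y) \<in> borel_measurable borel"
    by (intro borel_measurable_continuous_onI continuous_intros)+
  then show "(\<lambda>y. h (a + y)) \<in> borel_measurable borel" "(\<lambda>y. h (a - y)) \<in> borel_measurable borel"
    using assms by (auto intro: measurable_compose)
qed

lemma haar_nn_integral_mult_reflect:
  fixes \<nu> :: "'g::{topological_ab_group_add, metric_space} measure" and f g :: "'g \<Rightarrow> ennreal"
  assumes haar: "haar_measure \<nu>" and "sigma_finite_measure \<nu>"
    and countable_base: "second_countable (euclidean :: 'g topology)"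
    and f: "f \<in> borel_measurable borel" and g: "g \<in> borel_measurable borel"
  shows "(\<integral>\<^sup>+x. f x \<partial>\<nu>) * (\<integral>\<^sup>+x. g x \<partial>\<nu>) = (\<integral>\<^sup>+x. g x \<partial>\<nu>) * (\<integral>\<^sup>+x. f (- x) \<partial>\<nu>)"
proof -
  interpret pair_sigma_finite \<nu> \<nu>
    using \<open>sigma_finite_measure \<nu>\<close> by (simp add: pair_sigma_finite_def)
  have sets: "sets \<nu> = sets borel"
    using haar by (rule haar_measure_sets)
  have \<nu>_borel: "measurable \<nu> X = measurable borel X" for X :: "'x measure"
    using sets by (rule measurable_cong_sets) simp
  have "continuous_on UNIV (\<lambda>p :: 'g \<times> 'g. fst p + snd p)"
    and "continuous_on UNIV (\<lambda>p :: 'g \<times> 'g. fst p - snd p)"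
    by (intro continuous_intros)+
  from borel_measurable_pair_times_continuous[OF countable_base sets f g this(1)]
    borel_measurable_pair_times_continuous[OF countable_base sets g f this(2)]
  have Fubini1: "(\<integral>\<^sup>+x. \<integral>\<^sup>+y. f x * g (x + y) \<partial>\<nu> \<partial>\<nu>) = (\<integral>\<^sup>+y. \<integral>\<^sup>+x. f x * g (x + y) \<partial>\<nu> \<partial>\<nu>)"
    and Fubini2: "(\<integral>\<^sup>+y. \<integral>\<^sup>+x. g x * f (x - y) \<partial>\<nu> \<partial>\<nu>) = (\<integral>\<^sup>+x. \<integral>\<^sup>+y. g x * f (x - y) \<partial>\<nu> \<partial>\<nu>)"
    by (simp_all add: Fubini')
  have "(\<integral>\<^sup>+x. f x \<partial>\<nu>) * (\<integral>\<^sup>+y. g y \<partial>\<nu>) = (\<integral>\<^sup>+x. f x * (\<integral>\<^sup>+y. g (x + y) \<partial>\<nu>) \<partial>\<nu>)"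
    using haar_nn_integral_translate[OF haar g] f by (simp add: nn_integral_multc add.commute \<nu>_borel)
  also have "\<dots> = (\<integral>\<^sup>+y. \<integral>\<^sup>+x. f x * g (x + y) \<partial>\<nu> \<partial>\<nu>)"
    using borel_measurable_add_left[OF g] Fubini1 by (simp add: nn_integral_cmult \<nu>_borel)
  also have "\<dots> = (\<integral>\<^sup>+y. \<integral>\<^sup>+x. g x * f (x - y) \<partial>\<nu> \<partial>\<nu>)"
  proof (rule nn_integral_cong)
    fix y
    have "(\<lambda>x. f x * g (y + x)) \<in> borel_measurable borel"
      using f borel_measurable_add_left[OF g] by (rule borel_measurable_times_ennreal)
    from haar_nn_integral_translate[OF haar this, of "- y"]
    show "(\<integral>\<^sup>+x. f x * g (x + y) \<partial>\<nu>) = (\<integral>\<^sup>+x. g x * f (x - y) \<partial>\<nu>)"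
      by (simp add: add.commute mult.commute)
  qed
  also have "\<dots> = (\<integral>\<^sup>+x. g x * (\<integral>\<^sup>+y. f (x - y) \<partial>\<nu>) \<partial>\<nu>)"
    using borel_measurable_diff_left[OF f] Fubini2 by (simp add: nn_integral_cmult \<nu>_borel)
  also have "\<dots> = (\<integral>\<^sup>+x. g x * (\<integral>\<^sup>+y. f (- y) \<partial>\<nu>) \<partial>\<nu>)"
  proof (rule nn_integral_cong)
    fix x
    from haar_nn_integral_translate[OF haar borel_measurable_diff_left[OF f, of 0], of "- x"]
    show "g x * (\<integral>\<^sup>+y. f (x - y) \<partial>\<nu>) = g x * (\<integral>\<^sup>+y. f (- y) \<partial>\<nu>)"
      by simp
  qed
  also have "\<dots> = (\<integral>\<^sup>+y. g y \<partial>\<nu>) * (\<integral>\<^sup>+y. f (- y) \<partial>\<nu>)"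
    using g by (simp add: nn_integral_multc \<nu>_borel)
  finally show ?thesis .
qed

lemma haar_distr_uminus:
  fixes \<nu> :: "'g::{topological_ab_group_add, metric_space} measure"
  assumes haar: "haar_measure \<nu>"
    and sigma_compact: "\<exists>\<C>. countable \<C> \<and> (\<forall>C\<in>\<C>. compact C) \<and> \<Union>\<C> = (UNIV :: 'g set)"
  shows "distr \<nu> borel uminus = \<nu>"
proof (rule measure_eqI)
  have sets: "sets \<nu> = sets borel"
    using haar by (rule haar_measure_sets)
  have uminus: "uminus \<in> measurable \<nu> (borel :: 'g measure)"
    unfolding measurable_cong_sets[OF sets refl]
    by (intro borel_measurable_continuous_onI continuous_intros)
  obtain C where C: "compact C" "0 < emeasure \<nu> C" "emeasure \<nu> C < \<infinity>"
    using haar_obtain_compact_positive_finite[OF haar sigma_compact] by metis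
  show "sets (distr \<nu> borel uminus) = sets \<nu>"
    using sets by simp
  fix A assume "A \<in> sets (distr \<nu> borel uminus)"
  then have A: "A \<in> sets borel" by simp
  have "C \<in> sets borel"
    using C(1) by (simp add: borel_closed compact_imp_closed)
  then have "(\<integral>\<^sup>+x. indicator A x \<partial>\<nu>) * (\<integral>\<^sup>+x. indicator C x \<partial>\<nu>)
      = (\<integral>\<^sup>+x. indicator C x \<partial>\<nu>) * (\<integral>\<^sup>+x. indicator A (- x) \<partial>\<nu>)"
    using A haar_sigma_finite[OF haar sigma_compact] sigma_compact_imp_second_countable[OF sigma_compact]
    by (intro haar_nn_integral_mult_reflect[OF haar]) simp_all
  moreover have "(\<lambda>x. indicator A (- x) :: ennreal) = indicator (uminus -` A \<inter> space \<nu>)"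
    by (auto simp: haar_measure_space[OF haar] indicator_def)
  ultimately have "emeasure \<nu> C * emeasure \<nu> A = emeasure \<nu> C * emeasure \<nu> (uminus -` A \<inter> space \<nu>)"
    using A \<open>C \<in> sets borel\<close> measurable_sets[OF uminus A] sets by (simp add: mult.commute)
  then have "emeasure \<nu> (uminus -` A \<inter> space \<nu>) = emeasure \<nu> A"
    using C(2,3) by (auto simp: ennreal_mult_cancel_left)
  then show "emeasure (distr \<nu> borel uminus) A = emeasure \<nu> A"
    by (simp add: emeasure_distr[OF uminus A])
qed

lemma dual_group_norm: "\<xi> \<in> dual_group \<Longrightarrow> cmod (\<xi> u) = 1"
  unfolding dual_group_def by simp

lemma dual_group_continuous: "\<xi> \<in> dual_group \<Longrightarrow> continuous_on UNIV \<xi>"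
  unfolding dual_group_def by simp

lemma dual_group_uminus:
  assumes "\<xi> \<in> dual_group"
  shows "\<xi> (- u) = cnj (\<xi> u)"
proof -
  have mult: "\<xi> (x + y) = \<xi> x * \<xi> y" for x y
    using assms unfolding dual_group_def by simp
  have nonzero: "\<xi> x \<noteq> 0" for x
    using dual_group_norm[OF assms, of x] by auto
  have "\<xi> 0 * \<xi> 0 = \<xi> 0 * 1"
    using mult[of 0 0] by simp
  then have "\<xi> 0 = 1"
    using nonzero[of 0] by simp
  then have "\<xi> u * \<xi> (- u) = 1"
    using mult[of u "- u"] by simp
  moreover have "\<xi> u * cnj (\<xi> u) = 1"
  proof -
    have "\<xi> u * cnj (\<xi> u) = complex_of_real ((cmod (\<xi> u))\<^sup>2)"
      by (rule complex_norm_square[symmetric])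
    then show ?thesis
      using dual_group_norm[OF assms, of u] by simp
  qed
  ultimately have "\<xi> u * \<xi> (- u) = \<xi> u * cnj (\<xi> u)"
    by simp
  then show ?thesis
    using nonzero[of u] by simp
qed

lemma borel_measurable_fourier_integrand:
  assumes "k \<in> borel_measurable M" and "\<xi> \<in> dual_group" and "sets M = sets borel"
  shows "(\<lambda>u. k u * cnj (\<xi> u)) \<in> borel_measurable M"
proof -
  have "continuous_on UNIV (\<lambda>u. cnj (\<xi> u))"
    using dual_group_continuous[OF assms(2)] by (intro continuous_intros)
  then have "(\<lambda>u. cnj (\<xi> u)) \<in> borel_measurable M"
    unfolding measurable_cong_sets[OF assms(3) refl] by (rule borel_measurable_continuous_onI)
  with assms(1) show ?thesis
    by (rule borel_measurable_times)
qed

definition fourier_transform :: "'a measure \<Rightarrow> ('a \<Rightarrow> complex) \<Rightarrow> ('a \<Rightarrow> complex) \<Rightarrow> complex" where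
  "fourier_transform M k \<xi> = (\<integral>u. k u * cnj (\<xi> u) \<partial>M)"

lemma Im_integral_eq_0_if_reflect_cnj:
  fixes h :: "'g::topological_group_add \<Rightarrow> complex"
  assumes "distr M borel uminus = M" and "sets M = sets borel"
    and "h \<in> borel_measurable M" and "\<And>u. h (- u) = cnj (h u)"
  shows "Im (integral\<^sup>L M h) = 0"
proof -
  have "uminus \<in> measurable M (borel :: 'g measure)"
    unfolding measurable_cong_sets[OF assms(2) refl]
    by (intro borel_measurable_continuous_onI continuous_intros)
  moreover have "h \<in> borel_measurable borel"
    using assms(3) by (simp add: measurable_cong_sets[OF assms(2) refl])
  ultimately have "integral\<^sup>L M h = (\<integral>u. h (- u) \<partial>M)"
    using assms(1) integral_distr by metis
  also have "\<dots> = cnj (integral\<^sup>L M h)"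
    unfolding assms(4) by (rule Bochner_Integration.integral_cnj)
  finally have "Im (integral\<^sup>L M h) = Im (cnj (integral\<^sup>L M h))"
    by (rule arg_cong)
  then show ?thesis
    by simp
qed

lemma Im_fourier_transform_eq_0:
  fixes k :: "'g::{topological_ab_group_add, metric_space} \<Rightarrow> complex"
  assumes "distr M borel uminus = M" and "sets M = sets borel"
    and "k \<in> borel_measurable M" and "\<And>u. k (- u) = cnj (k u)" and "\<xi> \<in> dual_group"
  shows "Im (fourier_transform M k \<xi>) = 0"
  unfolding fourier_transform_def
proof (rule Im_integral_eq_0_if_reflect_cnj[OF assms(1,2)])
  show "(\<lambda>u. k u * cnj (\<xi> u)) \<in> borel_measurable M"
    using assms(3,5,2) by (rule borel_measurable_fourier_integrand)
  show "k (- u) * cnj (\<xi> (- u)) = cnj (k u * cnj (\<xi> u))" for u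
    by (simp add: assms(4) dual_group_uminus[OF assms(5)])
qed

lemma integrable_obtain_compact_tail:
  fixes f :: "'a::t2_space \<Rightarrow> 'b::{banach, second_countable_topology}"
  assumes "\<exists>\<C>. countable \<C> \<and> (\<forall>C\<in>\<C>. compact C) \<and> \<Union>\<C> = (UNIV :: 'a set)"
    and "sets M = sets borel" and "integrable M f" and "0 < r"
  obtains C where "compact C" "(\<integral>x. norm (f x) * indicator (- C) x \<partial>M) < r"
proof -
  obtain D :: "nat \<Rightarrow> 'a set" where D: "\<And>n. compact (D n)" "incseq D" "(\<Union>n. D n) = UNIV"
    using sigma_compact_exhaustion[OF assms(1)] by metis
  define tail where "tail n x = norm (f x) * indicator (- D n) x" for n x
  have "(\<lambda>n. integral\<^sup>L M (tail n)) \<longlonglongrightarrow> integral\<^sup>L M (\<lambda>x. 0)"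
  proof (rule integral_dominated_convergence[where w = "\<lambda>x. norm (f x)"])
    have "- D n \<in> sets M" for n
      using D(1) assms(2) by (simp add: borel_closed compact_imp_closed sets.compl_sets)
    then show "tail n \<in> borel_measurable M" for n
      unfolding tail_def using assms(3) by measurable
    show "integrable M (\<lambda>x. norm (f x))"
      using assms(3) by (rule integrable_norm)
    show "AE x in M. norm (tail n x) \<le> norm (f x)" for n
      by (simp add: tail_def indicator_def)
    show "AE x in M. (\<lambda>n. tail n x) \<longlonglongrightarrow> 0"
    proof (rule AE_I2)
      fix x
      obtain N where "x \<in> D N" using D(3) by (metis UNIV_I UN_E)
      then have "\<forall>n\<ge>N. tail n x = 0"
        using D(2) by (auto simp: tail_def incseq_def indicator_def)
      then show "(\<lambda>n. tail n x) \<longlonglongrightarrow> 0"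
        by (intro tendsto_eventually) (auto simp: eventually_sequentially)
    qed
  qed simp
  then have "eventually (\<lambda>n. integral\<^sup>L M (tail n) < r) sequentially"
    using assms(4) by (intro order_tendstoD(2)) simp_all
  then obtain n where "integral\<^sup>L M (tail n) < r"
    by (auto simp: eventually_sequentially)
  then show thesis
    using D(1) that unfolding tail_def by blast
qed

lemma integrable_fourier_integrand:
  assumes "integrable M k" and "\<xi> \<in> dual_group" and "sets M = sets borel"
  shows "integrable M (\<lambda>u. k u * cnj (\<xi> u))"
proof (rule Bochner_Integration.integrable_bound[OF assms(1)])
  show "(\<lambda>u. k u * cnj (\<xi> u)) \<in> borel_measurable M"
    using borel_measurable_integrable[OF assms(1)] assms(2,3) by (rule borel_measurable_fourier_integrand)
  show "AE u in M. norm (k u * cnj (\<xi> u)) \<le> norm (k u)"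
    by (simp add: norm_mult dual_group_norm[OF assms(2)])
qed

lemma fourier_transform_diff_le:
  fixes \<nu> :: "'g::{topological_ab_group_add, metric_space} measure"
  assumes sets: "sets \<nu> = sets borel" and k: "integrable \<nu> k"
    and \<xi>: "\<xi> \<in> dual_group" and \<xi>\<^sub>0: "\<xi>\<^sub>0 \<in> dual_group"
    and "C \<in> sets \<nu>" and "0 \<le> e" and close: "\<forall>x\<in>C. cmod (\<xi> x - \<xi>\<^sub>0 x) \<le> e"
  shows "cmod (fourier_transform \<nu> k \<xi> - fourier_transform \<nu> k \<xi>\<^sub>0)
    \<le> e * (\<integral>u. norm (k u) \<partial>\<nu>) + 2 * (\<integral>u. norm (k u) * indicator (- C) u \<partial>\<nu>)"
proof -
  have tail: "integrable \<nu> (\<lambda>u. norm (k u) * indicator (- C) u)"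
    using \<open>C \<in> sets \<nu>\<close> integrable_norm[OF k] sets by (intro integrable_real_mult_indicator) auto
  have bound: "norm (k u * cnj (\<xi> u) - k u * cnj (\<xi>\<^sub>0 u))
      \<le> e * norm (k u) + 2 * (norm (k u) * indicator (- C) u)" for u
  proof -
    have "cmod (\<xi> u - \<xi>\<^sub>0 u) \<le> cmod (\<xi> u) + cmod (\<xi>\<^sub>0 u)"
      by (rule norm_triangle_ineq4)
    then have "cmod (\<xi> u - \<xi>\<^sub>0 u) \<le> (if u \<in> C then e else 2)"
      using close dual_group_norm[OF \<xi>] dual_group_norm[OF \<xi>\<^sub>0] by auto
    then have "norm (k u) * cmod (\<xi> u - \<xi>\<^sub>0 u) \<le> norm (k u) * (if u \<in> C then e else 2)"
      by (rule mult_left_mono) simp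
    moreover have "norm (k u * cnj (\<xi> u) - k u * cnj (\<xi>\<^sub>0 u)) = norm (k u) * cmod (\<xi> u - \<xi>\<^sub>0 u)"
      by (metis complex_cnj_diff complex_mod_cnj norm_mult right_diff_distrib)
    moreover have "0 \<le> e * norm (k u)"
      using \<open>0 \<le> e\<close> by simp
    ultimately show ?thesis
      by (auto simp: indicator_def mult.commute)
  qed
  have "cmod (fourier_transform \<nu> k \<xi> - fourier_transform \<nu> k \<xi>\<^sub>0)
      = cmod (\<integral>u. k u * cnj (\<xi> u) - k u * cnj (\<xi>\<^sub>0 u) \<partial>\<nu>)"
    unfolding fourier_transform_def
    using integrable_fourier_integrand[OF k \<xi> sets] integrable_fourier_integrand[OF k \<xi>\<^sub>0 sets]
    by simp
  also have "\<dots> \<le> (\<integral>u. norm (k u * cnj (\<xi> u) - k u * cnj (\<xi>\<^sub>0 u)) \<partial>\<nu>)"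
    by (rule integral_norm_bound)
  also have "\<dots> \<le> (\<integral>u. e * norm (k u) + 2 * (norm (k u) * indicator (- C) u) \<partial>\<nu>)"
    using integrable_fourier_integrand[OF k \<xi> sets] integrable_fourier_integrand[OF k \<xi>\<^sub>0 sets]
      integrable_norm[OF k] tail bound
    by (intro integral_mono) auto
  also have "\<dots> = e * (\<integral>u. norm (k u) \<partial>\<nu>) + 2 * (\<integral>u. norm (k u) * indicator (- C) u \<partial>\<nu>)"
    using integrable_norm[OF k] tail by simp
  finally show ?thesis .
qed

lemma fourier_transform_compact_open_continuous:
  fixes \<nu> :: "'g::{topological_ab_group_add, metric_space} measure"
  assumes sigma_compact: "\<exists>\<C>. countable \<C> \<and> (\<forall>C\<in>\<C>. compact C) \<and> \<Union>\<C> = (UNIV :: 'g set)"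
    and sets: "sets \<nu> = sets borel" and k: "integrable \<nu> k" and \<xi>\<^sub>0: "\<xi>\<^sub>0 \<in> dual_group"
    and "0 < r"
  obtains C e where "compact C" "0 < e"
    "\<And>\<xi>. \<xi> \<in> dual_group \<Longrightarrow> \<forall>x\<in>C. cmod (\<xi> x - \<xi>\<^sub>0 x) < e \<Longrightarrow>
      cmod (fourier_transform \<nu> k \<xi> - fourier_transform \<nu> k \<xi>\<^sub>0) < r"
proof -
  have "0 < r / 4" using \<open>0 < r\<close> by simp
  then obtain C where C: "compact C" "(\<integral>u. norm (k u) * indicator (- C) u \<partial>\<nu>) < r / 4"
    using integrable_obtain_compact_tail[OF sigma_compact sets k] by metis
  have "C \<in> sets \<nu>"
    using C(1) sets by (simp add: borel_closed compact_imp_closed)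
  define m where "m = (\<integral>u. norm (k u) \<partial>\<nu>)"
  define e where "e = r / (2 * m + 2)"
  have "0 \<le> m"
    unfolding m_def by simp
  then have "0 < e" and "e * m < r / 2"
    using \<open>0 < r\<close> unfolding e_def by (simp_all add: field_simps)
  show thesis
  proof (rule that[OF C(1) \<open>0 < e\<close>])
    fix \<xi> assume "\<xi> \<in> dual_group" and "\<forall>x\<in>C. cmod (\<xi> x - \<xi>\<^sub>0 x) < e"
    then have "cmod (fourier_transform \<nu> k \<xi> - fourier_transform \<nu> k \<xi>\<^sub>0)
        \<le> e * m + 2 * (\<integral>u. norm (k u) * indicator (- C) u \<partial>\<nu>)"
      unfolding m_def using \<open>C \<in> sets \<nu>\<close> \<open>0 < e\<close>
      by (intro fourier_transform_diff_le[OF sets k _ \<xi>\<^sub>0]) (auto intro: less_imp_le)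
    also have "\<dots> < r"
      using C(2) \<open>e * m < r / 2\<close> by linarith
    finally show "cmod (fourier_transform \<nu> k \<xi> - fourier_transform \<nu> k \<xi>\<^sub>0) < r" .
  qed
qed

lemma dual_open_Re_fourier_transform_pos:
  fixes \<nu> :: "'g::{topological_ab_group_add, metric_space} measure"
  assumes "\<exists>\<C>. countable \<C> \<and> (\<forall>C\<in>\<C>. compact C) \<and> \<Union>\<C> = (UNIV :: 'g set)"
    and "sets \<nu> = sets borel" and "integrable \<nu> k"
  shows "openin dual_topology {\<xi> \<in> dual_group. 0 < Re (fourier_transform \<nu> k \<xi>)}"
  unfolding openin_dual_topology dual_open_def
proof (intro conjI ballI)
  fix \<xi>\<^sub>0 assume "\<xi>\<^sub>0 \<in> {\<xi> \<in> dual_group. 0 < Re (fourier_transform \<nu> k \<xi>)}"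
  then have \<xi>\<^sub>0: "\<xi>\<^sub>0 \<in> dual_group" and pos: "0 < Re (fourier_transform \<nu> k \<xi>\<^sub>0)"
    by auto
  obtain C e where "compact C" "0 < e" and near:
    "\<And>\<xi>. \<xi> \<in> dual_group \<Longrightarrow> \<forall>x\<in>C. cmod (\<xi> x - \<xi>\<^sub>0 x) < e \<Longrightarrow>
      cmod (fourier_transform \<nu> k \<xi> - fourier_transform \<nu> k \<xi>\<^sub>0) < Re (fourier_transform \<nu> k \<xi>\<^sub>0)"
    using fourier_transform_compact_open_continuous[OF assms \<xi>\<^sub>0 pos] by metis
  have "0 < Re (fourier_transform \<nu> k \<xi>)"
    if "\<xi> \<in> dual_group" "\<forall>x\<in>C. cmod (\<xi> x - \<xi>\<^sub>0 x) < e" for \<xi>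
    using near[OF that] abs_Re_le_cmod[of "fourier_transform \<nu> k \<xi> - fourier_transform \<nu> k \<xi>\<^sub>0"]
    by simp
  with \<open>compact C\<close> \<open>0 < e\<close> show "\<exists>C e. compact C \<and> 0 < e \<and>
      {\<xi> \<in> dual_group. \<forall>x\<in>C. cmod (\<xi> x - \<xi>\<^sub>0 x) < e}
        \<subseteq> {\<xi> \<in> dual_group. 0 < Re (fourier_transform \<nu> k \<xi>)}"
    by blast
qed auto

lemma rkhs_L2_kernel_measurable:
  assumes "rkhs_L2 M H K" and "z \<in> space M"
  shows "K z \<in> borel_measurable M"
  using assms unfolding rkhs_L2_def square_integrable_def by blast

lemma rkhs_L2_kernel_cnj:
  assumes "rkhs_L2 M H K" and "z \<in> space M" and "w \<in> space M"
  shows "K z w = cnj (K w z)"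
proof -
  have kernel: "K z \<in> H" "K w \<in> H"
    and reproducing: "\<And>f v. f \<in> H \<Longrightarrow> v \<in> space M \<Longrightarrow> f v = (\<integral>x. f x * cnj (K v x) \<partial>M)"
    using assms unfolding rkhs_L2_def by auto
  have "K z w = (\<integral>x. K z x * cnj (K w x) \<partial>M)"
    using kernel(1) assms(3) by (rule reproducing)
  also have "\<dots> = (\<integral>x. cnj (K w x * cnj (K z x)) \<partial>M)"
    by (simp add: mult.commute)
  also have "\<dots> = cnj (\<integral>x. K w x * cnj (K z x) \<partial>M)"
    by (rule Bochner_Integration.integral_cnj)
  also have "\<dots> = cnj (K w z)"
    using reproducing[OF kernel(2) assms(2)] by (rule arg_cong[symmetric])
  finally show ?thesis .
qed

lemma rkhs_L2_pair_kernel_measurable: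
  assumes "rkhs_L2 (M \<Otimes>\<^sub>M N) H (\<lambda>z w. K (fst z) (snd z) (fst w) (snd w))"
    and "x \<in> space M" and "y \<in> space N" and "v \<in> space N"
  shows "(\<lambda>u. K x y u v) \<in> borel_measurable M"
proof -
  have "(\<lambda>w. K x y (fst w) (snd w)) \<in> borel_measurable (M \<Otimes>\<^sub>M N)"
    using rkhs_L2_kernel_measurable[OF assms(1), of "(x, y)"] assms(2,3)
    by (simp add: space_pair_measure)
  from measurable_compose[OF measurable_Pair2'[OF assms(4)] this]
  show ?thesis by simp
qed

lemma translation_invariant_kernel_cnj:
  fixes K :: "'g::ab_group_add \<Rightarrow> 'y \<Rightarrow> 'g \<Rightarrow> 'y \<Rightarrow> complex"
  assumes "rkhs_L2 (M \<Otimes>\<^sub>M N) H (\<lambda>z w. K (fst z) (snd z) (fst w) (snd w))"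
    and "space M = UNIV"
    and shift: "\<And>u x v y. v \<in> space N \<Longrightarrow> y \<in> space N \<Longrightarrow> K x y u v = K 0 y (u - x) v"
    and "y \<in> space N"
  shows "K 0 y (- u) y = cnj (K 0 y u y)"
proof -
  have "K 0 y (- u) y = cnj (K (- u) y 0 y)"
    using rkhs_L2_kernel_cnj[OF assms(1), of "(0, y)" "(- u, y)"] assms(2,4)
    by (simp add: space_pair_measure)
  also have "\<dots> = cnj (K 0 y u y)"
    using shift[OF assms(4,4), of "- u" 0] by simp
  finally show ?thesis .
qed

theorem proposition3p1:
  fixes \<nu> :: "'g::{topological_ab_group_add, metric_space} measure"
    and lam :: "'y measure"
    and H :: "('g \<times> 'y \<Rightarrow> complex) set"
    and K :: "'g \<Rightarrow> 'y \<Rightarrow> 'g \<Rightarrow> 'y \<Rightarrow> complex"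
    and L :: "('g \<Rightarrow> complex) \<Rightarrow> 'y \<Rightarrow> 'y \<Rightarrow> complex"
    and \<Omega> :: "('g \<Rightarrow> complex) set"
  assumes loc_compact: "locally_compact_space (euclidean :: 'g topology)"
    and sigma_compact: "\<exists>\<C>. countable \<C> \<and> (\<forall>C\<in>\<C>. compact C) \<and> \<Union>\<C> = (UNIV :: 'g set)"
    and haar: "haar_measure \<nu>"
    and sigma_finite: "sigma_finite_measure lam"
    and sep_G: "L2_separable \<nu>"
    and sep_Y: "L2_separable lam"
    and rkhs: "rkhs_L2 (\<nu> \<Otimes>\<^sub>M lam) H (\<lambda>z w. K (fst z) (snd z) (fst w) (snd w))"
    and shift: "\<And>u x v y. v \<in> space lam \<Longrightarrow> y \<in> space lam \<Longrightarrow> K x y u v = K 0 y (u - x) v"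
    and L1_bound: "\<And>y. y \<in> space lam \<Longrightarrow>
        (SUP v\<in>space lam. \<integral>\<^sup>+ u. ennreal (cmod (K 0 y u v)) \<partial>\<nu>) < \<infinity>"
    and L_def: "\<And>\<xi> y v. L \<xi> y v = (\<integral>u. K 0 y u v * cnj (\<xi> u) \<partial>\<nu>)"
    and Omega_def: "\<Omega> = {\<xi> \<in> dual_group. \<exists>y\<in>space lam. Im (L \<xi> y y) = 0 \<and> Re (L \<xi> y y) > 0}"
  shows "openin dual_topology \<Omega>"
proof -
  have sets: "sets \<nu> = sets borel"
    using haar by (rule haar_measure_sets)
  define k where "k y u = K 0 y u y" for y u
  have k_measurable: "k y \<in> borel_measurable \<nu>" if "y \<in> space lam" for y
    unfolding k_def using rkhs_L2_pair_kernel_measurable[OF rkhs _ that that] haar_measure_space[OF haar]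
    by simp
  have k_integrable: "integrable \<nu> (k y)" if "y \<in> space lam" for y
  proof (rule integrableI_bounded)
    show "k y \<in> borel_measurable \<nu>"
      using that by (rule k_measurable)
    have "(\<integral>\<^sup>+u. ennreal (norm (k y u)) \<partial>\<nu>) \<le> (SUP v\<in>space lam. \<integral>\<^sup>+u. ennreal (cmod (K 0 y u v)) \<partial>\<nu>)"
      unfolding k_def using that by (rule SUP_upper)
    then show "(\<integral>\<^sup>+u. ennreal (norm (k y u)) \<partial>\<nu>) < \<infinity>"
      using L1_bound[OF that] by (rule le_less_trans)
  qed
  have k_cnj: "k y (- u) = cnj (k y u)" if "y \<in> space lam" for y u
    unfolding k_def using rkhs haar_measure_space[OF haar] shift that
    by (rule translation_invariant_kernel_cnj)
  have "L \<xi> y y = fourier_transform \<nu> (k y) \<xi>" for \<xi> y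
    by (simp add: L_def k_def fourier_transform_def)
  then have "\<Omega> = (\<Union>y\<in>space lam. {\<xi> \<in> dual_group. 0 < Re (fourier_transform \<nu> (k y) \<xi>)})"
    using Im_fourier_transform_eq_0[OF haar_distr_uminus[OF haar sigma_compact] sets k_measurable k_cnj]
    unfolding Omega_def by auto
  then show ?thesis
    using dual_open_Re_fourier_transform_pos[OF sigma_compact sets k_integrable]
    by (auto intro: openin_Union)
qed

end
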